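(* Let $S\subset\mathbb{R}^3$ be a compact convex solid of volume $V>0$ that is centrally symmetric with respect to a point $C$ (i.e. for every $P\in S$ the point $P'$ with $\overrightarrow{CP}+\overrightarrow{CP'}=0$ also lies in $S$). Suppose $S$ is contained in the half-space $\{z\ge 0\}$ and touches the plane $z=0$ (the orifice is at the bottom of the solid, located in the $xy$-plane), and let $h_C>0$ be the $z$-coordinate (altitude) of $C$. Let $K>0$ be a constant and define the drainage time $$T=\frac{1}{K}\iiint_S \frac{1}{\sqrt{z}}\,dx\,dy\,dz .$$ Then $$\frac{V}{K\sqrt{h_C}}\le T\le \frac{\sqrt{2}\,V}{K\sqrt{h_C}}.$$
   Context: This $T$ is the total drainage time given by Torricelli's law $A(h)\,h'(t)=-ka\sqrt{2gh}$ for a container of shape $S$ with a small hole at its lowest point, where $A(h)$ is the area of the horizontal cross-section of $S$ at height $h$ and $K=ka\sqrt{2g}$; equivalently $T=\frac1K\int_0^H A(h)h^{-1/2}\,dh$, with $H$ the height of $S$. *)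

theory Defs
  imports "HOL-Analysis.Analysis"
begin

definition drainage_time :: "real \<Rightarrow> (real^3) set \<Rightarrow> real" where
  "drainage_time K S = (1 / K) * integral S (\<lambda>p. 1 / sqrt (p $ 3))"

end

theory Submission
  imports Defs
begin

text \<open>Write \<open>A z\<close> for the area of the horizontal section of \<open>S\<close> at height \<open>z\<close> and
  \<open>h\<close> for the height of \<open>C\<close>. By Fubini the integral is \<open>\<integral> A z / sqrt z dz\<close>, and
  \<open>\<integral> A = V\<close>. Central symmetry confines \<open>S\<close> to \<open>0 \<le> z \<le> 2 h\<close> and makes \<open>A\<close> symmetric
  about \<open>h\<close>; moreover, for \<open>z\<^sub>1 \<le> z\<^sub>2 \<le> h\<close> the section at \<open>z\<^sub>2\<close> contains a convex
  combination of the section at \<open>z\<^sub>1\<close> and of its point reflection, so the Brunn--Minkowski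
  inequality in the plane makes \<open>A\<close> nondecreasing on \<open>[0, h]\<close>.

  Symmetrising, \<open>2 \<integral> A z / sqrt z dz = \<integral> A z w z dz\<close> with \<open>w z = 1 / sqrt z + 1 / sqrt (2 h - z)\<close>.
  The lower bound follows from \<open>w \<ge> 2 / sqrt h\<close>. For the upper bound, \<open>w\<close> decreases on
  \<open>(0, h]\<close> while \<open>A\<close> increases, so by Chebyshev's argument \<open>A\<close> and \<open>w\<close> are oppositely
  ordered around the point \<open>z\<^sub>0\<close> where \<open>w z\<^sub>0 = 2 sqrt 2 / sqrt h\<close>; as this constant has the
  same integral over \<open>[0, 2 h]\<close> as \<open>w\<close>, it follows that \<open>\<integral> A w \<le> 2 sqrt 2 V / sqrt h\<close>.\<close>

section \<open>The one-dimensional Brunn--Minkowski inequality\<close>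

lemma interval_interpolate_mem:
  fixes I :: "real set"
  assumes "is_interval I" "bounded I" "I \<noteq> {}" "0 < \<theta>" "\<theta> < 1"
  shows "Inf I + \<theta> * (Sup I - Inf I) \<in> I"
proof -
  have bdd: "bdd_below I" "bdd_above I"
    using assms(2) bounded_imp_bdd_below bounded_imp_bdd_above by auto
  define t where "t = Inf I + \<theta> * (Sup I - Inf I)"
  consider "Inf I = Sup I" | "Inf I < Sup I"
    using cInf_le_cSup[OF assms(3) bdd(2,1)] by linarith
  then show ?thesis
  proof cases
    case 1
    obtain x where "x \<in> I" using assms(3) by blast
    with 1 bdd have "x = Inf I" by (metis cInf_lower cSup_upper order_antisym)
    with 1 \<open>x \<in> I\<close> show ?thesis by simp
  next
    case 2
    then have "\<theta> * (Sup I - Inf I) < Sup I - Inf I" "0 < \<theta> * (Sup I - Inf I)"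
      using assms(4,5) by simp_all
    then have "Inf I < t" "t < Sup I" by (simp_all add: t_def)
    then obtain x y where "x \<in> I" "x < t" "y \<in> I" "t < y"
      using cInf_less_iff[OF assms(3) bdd(1)] less_cSup_iff[OF assms(3) bdd(2)] by blast
    then show ?thesis
      using assms(1) unfolding is_interval_1 t_def[symmetric] by (meson less_imp_le)
  qed
qed

lemma emeasure_interval_le_width:
  fixes I :: "real set"
  assumes "bounded I" "I \<noteq> {}"
  shows "emeasure lborel I \<le> ennreal (Sup I - Inf I)"
proof -
  have "bdd_below I" "bdd_above I"
    using assms(1) bounded_imp_bdd_below bounded_imp_bdd_above by auto
  then have "I \<subseteq> {Inf I .. Sup I}" and "Inf I \<le> Sup I"
    using assms(2) by (auto intro: cInf_lower cSup_upper cInf_le_cSup)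
  then show ?thesis
    using emeasure_mono[of I "{Inf I .. Sup I}" lborel] by simp
qed

lemma brunn_minkowski_interval:
  fixes I J N :: "real set"
  assumes I: "is_interval I" "bounded I" "I \<noteq> {}"
    and J: "is_interval J" "bounded J" "J \<noteq> {}"
    and N: "N \<in> sets lborel" and s: "0 \<le> s" "s \<le> 1"
    and comb: "\<And>x y. x \<in> I \<Longrightarrow> y \<in> J \<Longrightarrow> s * x + (1 - s) * y \<in> N"
  shows "ennreal s * emeasure lborel I + ennreal (1 - s) * emeasure lborel J \<le> emeasure lborel N"
proof -
  define L where "L = s * Inf I + (1 - s) * Inf J"
  define U where "U = s * Sup I + (1 - s) * Sup J"
  have "Inf I \<le> Sup I" "Inf J \<le> Sup J"
    using I J by (auto intro!: cInf_le_cSup bounded_imp_bdd_below bounded_imp_bdd_above)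
  then have width: "0 \<le> Sup I - Inf I" "0 \<le> Sup J - Inf J" by simp_all
  have UL: "U - L = s * (Sup I - Inf I) + (1 - s) * (Sup J - Inf J)"
    by (simp add: L_def U_def algebra_simps)
  have "0 \<le> U - L"
    unfolding UL using s width by simp
  have sub: "{L<..<U} \<subseteq> N"
  proof
    fix t assume t: "t \<in> {L<..<U}"
    define \<theta> where "\<theta> = (t - L) / (U - L)"
    have \<theta>: "0 < \<theta>" "\<theta> < 1" using t by (auto simp: \<theta>_def field_simps)
    have "Inf I + \<theta> * (Sup I - Inf I) \<in> I" "Inf J + \<theta> * (Sup J - Inf J) \<in> J"
      using interval_interpolate_mem I J \<theta> by auto
    from comb[OF this] have "L + \<theta> * (U - L) \<in> N"
      by (simp add: L_def U_def algebra_simps)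
    then show "t \<in> N" using t by (simp add: \<theta>_def)
  qed
  have "ennreal s * emeasure lborel I + ennreal (1 - s) * emeasure lborel J
      \<le> ennreal s * ennreal (Sup I - Inf I) + ennreal (1 - s) * ennreal (Sup J - Inf J)"
    using I J by (intro add_mono mult_left_mono emeasure_interval_le_width) auto
  also have "\<dots> = ennreal (s * (Sup I - Inf I)) + ennreal ((1 - s) * (Sup J - Inf J))"
    using s width by (simp add: ennreal_mult)
  also have "\<dots> = ennreal (U - L)"
    using s width by (simp add: UL ennreal_plus)
  also have "\<dots> = emeasure lborel {L<..<U}"
    using \<open>0 \<le> U - L\<close> by simp
  also have "\<dots> \<le> emeasure lborel N"
    using sub N by (intro emeasure_mono) auto
  finally show ?thesis .
qed

section \<open>Slices of sets in a product space\<close>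

lemma emeasure_lborel_reflect:
  fixes F :: "'a::euclidean_space set"
  assumes "F \<in> sets borel"
  shows "emeasure lborel ((\<lambda>x. b - x) ` F) = emeasure lborel F"
proof -
  have "distr lborel borel (\<lambda>x. b - x) = (lborel :: 'a measure)"
    using lborel_affine[of "-1" b] by (simp add: density_1)
  moreover have "(\<lambda>x. b - x) ` F = (\<lambda>x. b - x) -` F"
    by (force intro: image_eqI[where x="b - _"])
  ultimately show ?thesis
    using emeasure_distr[of "\<lambda>x. b - x" lborel borel F] assms by simp
qed

lemma sets_lborel_pair:
  "sets (lborel \<Otimes>\<^sub>M lborel :: ('a::euclidean_space \<times> 'b::euclidean_space) measure) = sets borel"
  by (metis lborel_prod sets_lborel)

lemma Pair_vimage_eq_snd_image: "Pair y -` K = snd ` (K \<inter> {y} \<times> UNIV)"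
  by force

lemma compact_Pair_vimage:
  fixes K :: "('a::t1_space \<times> 'b::topological_space) set"
  assumes "compact K"
  shows "compact (Pair y -` K)"
  unfolding Pair_vimage_eq_snd_image
  by (intro compact_continuous_image continuous_on_snd continuous_on_id compact_Int_closed
      closed_Times assms) auto

lemma convex_Pair_vimage:
  fixes K :: "('a::real_vector \<times> 'b::real_vector) set"
  assumes "convex K"
  shows "convex (Pair y -` K)"
  unfolding Pair_vimage_eq_snd_image
  by (intro convex_linear_image convex_Int convex_Times assms linear_snd) auto

definition slice_measure :: "('a::euclidean_space \<times> 'b::euclidean_space) set \<Rightarrow> 'a \<Rightarrow> real" where
  "slice_measure K y = measure lborel (Pair y -` K)"

lemma slice_measure_nonneg [simp]: "0 \<le> slice_measure K y"
  by (simp add: slice_measure_def)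

lemma borel_measurable_slice_measure[measurable]:
  assumes "K \<in> sets borel"
  shows "slice_measure K \<in> borel_measurable borel"
proof -
  have "(\<lambda>y. emeasure lborel (Pair y -` K)) \<in> borel_measurable lborel"
    using assms sets_lborel_pair by (intro lborel.measurable_emeasure_Pair) blast
  then show ?thesis
    unfolding slice_measure_def[abs_def] measure_def by simp
qed

lemma emeasure_Pair_vimage_compact:
  assumes "compact K"
  shows "emeasure lborel (Pair y -` K) = ennreal (slice_measure K y)"
  unfolding slice_measure_def
  using emeasure_compact_finite[OF compact_Pair_vimage[OF assms]]
  by (intro emeasure_eq_ennreal_measure) (simp add: less_top)

lemma nn_integral_compact_eq_slice_measure:
  fixes f :: "'a::euclidean_space \<Rightarrow> ennreal" and K :: "('a \<times> 'b::euclidean_space) set"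
  assumes K: "compact K" and [measurable]: "f \<in> borel_measurable borel"
  shows "(\<integral>\<^sup>+q. indicator K q * f (fst q) \<partial>lborel)
    = (\<integral>\<^sup>+y. ennreal (slice_measure K y) * f y \<partial>lborel)"
proof -
  have [measurable]: "K \<in> sets (lborel \<Otimes>\<^sub>M lborel)"
    using borel_compact[OF K] sets_lborel_pair by blast
  have "(\<integral>\<^sup>+q. indicator K q * f (fst q) \<partial>lborel)
      = (\<integral>\<^sup>+y. \<integral>\<^sup>+x. indicator K (y, x) * f y \<partial>lborel \<partial>lborel)"
    by (simp add: lborel_prod[symmetric] lborel.nn_integral_fst[symmetric])
  also have "\<dots> = (\<integral>\<^sup>+y. ennreal (slice_measure K y) * f y \<partial>lborel)"
  proof (intro nn_integral_cong)
    fix y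
    have "Pair y -` K \<in> sets lborel"
      using borel_compact[OF compact_Pair_vimage[OF K]] by simp
    then have "(\<integral>\<^sup>+x. indicator K (y, x) * f y \<partial>lborel) = emeasure lborel (Pair y -` K) * f y"
      by (simp add: nn_integral_multc indicator_vimage[symmetric] del: indicator_vimage)
    then show "(\<integral>\<^sup>+x. indicator K (y, x) * f y \<partial>lborel) = ennreal (slice_measure K y) * f y"
      by (simp add: emeasure_Pair_vimage_compact[OF K])
  qed
  finally show ?thesis .
qed

lemma emeasure_compact_eq_nn_integral_slice_measure:
  fixes K :: "('a::euclidean_space \<times> 'b::euclidean_space) set"
  assumes "compact K"
  shows "emeasure lborel K = (\<integral>\<^sup>+y. ennreal (slice_measure K y) \<partial>lborel)"
  using nn_integral_compact_eq_slice_measure[OF assms, of "\<lambda>_. 1"] borel_compact[OF assms]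
  by simp

section \<open>The Brunn--Minkowski inequality in the plane\<close>

lemma ennreal_convex_combination:
  assumes "0 \<le> s" "s \<le> 1" "0 \<le> a" "0 \<le> b"
  shows "ennreal s * ennreal a + ennreal (1 - s) * ennreal b = ennreal (s * a + (1 - s) * b)"
  using assms by (simp add: ennreal_mult)

lemma slice_measure_convex_combination:
  fixes K L M :: "(real \<times> real) set"
  assumes K: "compact K" "convex K" and L: "compact L" "convex L" and M: "compact M"
    and s: "0 \<le> s" "s \<le> 1"
    and comb: "\<And>p q. p \<in> K \<Longrightarrow> q \<in> L \<Longrightarrow> s *\<^sub>R p + (1 - s) *\<^sub>R q \<in> M"
    and ne: "Pair y1 -` K \<noteq> {}" "Pair y2 -` L \<noteq> {}"
  shows "s * slice_measure K y1 + (1 - s) * slice_measure L y2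
    \<le> slice_measure M (s * y1 + (1 - s) * y2)"
proof -
  have "ennreal s * emeasure lborel (Pair y1 -` K)
      + ennreal (1 - s) * emeasure lborel (Pair y2 -` L)
      \<le> emeasure lborel (Pair (s * y1 + (1 - s) * y2) -` M)"
  proof (rule brunn_minkowski_interval)
    show "is_interval (Pair y1 -` K)" "is_interval (Pair y2 -` L)"
      using K L by (simp_all add: is_interval_convex_1 convex_Pair_vimage)
    show "bounded (Pair y1 -` K)" "bounded (Pair y2 -` L)"
      using K L by (simp_all add: compact_imp_bounded compact_Pair_vimage)
    show "Pair (s * y1 + (1 - s) * y2) -` M \<in> sets lborel"
      using M by (simp add: borel_compact compact_Pair_vimage)
    fix x y assume "x \<in> Pair y1 -` K" "y \<in> Pair y2 -` L"
    then have "s *\<^sub>R (y1, x) + (1 - s) *\<^sub>R (y2, y) \<in> M" by (intro comb) auto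
    then show "s * x + (1 - s) * y \<in> Pair (s * y1 + (1 - s) * y2) -` M" by simp
  qed (use ne s in auto)
  then show ?thesis
    using s K(1) L(1) M
    by (simp add: emeasure_Pair_vimage_compact ennreal_convex_combination del: ennreal_plus)
qed

lemma bounded_slice_measure_superlevel:
  assumes "compact K" "0 \<le> r"
  shows "bounded {y. r < slice_measure K y}"
proof (rule bounded_subset)
  show "bounded (fst ` K)"
    by (intro compact_imp_bounded compact_continuous_image continuous_intros assms(1))
  show "{y. r < slice_measure K y} \<subseteq> fst ` K"
  proof
    fix y assume "y \<in> {y. r < slice_measure K y}"
    then have "Pair y -` K \<noteq> {}" using assms(2) by (auto simp: slice_measure_def)
    then show "y \<in> fst ` K" by force
  qed
qed

lemma convex_slice_measure_superlevel:
  fixes K :: "(real \<times> real) set"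
  assumes K: "compact K" "convex K" and r: "0 \<le> r"
  shows "convex {y. r < slice_measure K y}"
proof (rule convexI)
  fix y1 y2 and u v :: real
  assume y: "y1 \<in> {y. r < slice_measure K y}" "y2 \<in> {y. r < slice_measure K y}"
    and uv: "0 \<le> u" "0 \<le> v" "u + v = 1"
  have "Pair y1 -` K \<noteq> {}" "Pair y2 -` K \<noteq> {}"
    using y r by (auto simp: slice_measure_def)
  with K uv have "u * slice_measure K y1 + (1 - u) * slice_measure K y2
      \<le> slice_measure K (u * y1 + (1 - u) * y2)"
    by (intro slice_measure_convex_combination convexD) auto
  moreover have "r < u * slice_measure K y1 + (1 - u) * slice_measure K y2"
    using convex_bound_lt[of "- slice_measure K y1" "- r" "- slice_measure K y2" u "1 - u"] y uv
    by simp
  moreover have "v = 1 - u" using uv by simp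
  ultimately show "u *\<^sub>R y1 + v *\<^sub>R y2 \<in> {y. r < slice_measure K y}" by simp
qed

lemma nn_integral_layer_cake:
  fixes g :: "real \<Rightarrow> real"
  assumes [measurable]: "g \<in> borel_measurable borel" and nonneg: "\<And>y. 0 \<le> g y"
  shows "(\<integral>\<^sup>+y. ennreal (g y) \<partial>lborel) = (\<integral>\<^sup>+r\<in>{0..}. emeasure lborel {y. r < g y} \<partial>lborel)"
proof -
  let ?G = "\<lambda>y r. indicator {p::real \<times> real. 0 \<le> snd p \<and> snd p < g (fst p)} (y, r) :: ennreal"
  have meas: "(\<lambda>(y, r). ?G y r) \<in> borel_measurable (lborel \<Otimes>\<^sub>M lborel)"
    by measurable
  have "(\<integral>\<^sup>+y. ennreal (g y) \<partial>lborel) = (\<integral>\<^sup>+y. (\<integral>\<^sup>+r. ?G y r \<partial>lborel) \<partial>lborel)"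
  proof (intro nn_integral_cong)
    fix y
    have "(\<integral>\<^sup>+r. ?G y r \<partial>lborel) = (\<integral>\<^sup>+r. indicator {0..<g y} r \<partial>lborel)"
      by (intro nn_integral_cong) (auto simp: indicator_def)
    then show "ennreal (g y) = (\<integral>\<^sup>+r. ?G y r \<partial>lborel)" using nonneg[of y] by simp
  qed
  also have "\<dots> = (\<integral>\<^sup>+r. (\<integral>\<^sup>+y. ?G y r \<partial>lborel) \<partial>lborel)"
    using lborel_pair.Fubini'[OF meas] by simp
  also have "\<dots> = (\<integral>\<^sup>+r\<in>{0..}. emeasure lborel {y. r < g y} \<partial>lborel)"
  proof (intro nn_integral_cong)
    fix r :: real
    have "(\<integral>\<^sup>+y. ?G y r \<partial>lborel) = (\<integral>\<^sup>+y. indicator {0..} r * indicator {y. r < g y} y \<partial>lborel)"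
      by (intro nn_integral_cong) (auto simp: indicator_def)
    also have "\<dots> = indicator {0..} r * emeasure lborel {y. r < g y}"
      by (simp add: nn_integral_cmult)
    finally show "(\<integral>\<^sup>+y. ?G y r \<partial>lborel) = emeasure lborel {y. r < g y} * indicator {0..} r"
      by (simp add: mult.commute)
  qed
  finally show ?thesis .
qed

lemma emeasure_compact_layer_cake:
  fixes K :: "(real \<times> 'b::euclidean_space) set"
  assumes "compact K"
  shows "emeasure lborel K = (\<integral>\<^sup>+r\<in>{0..}. emeasure lborel {y. r < slice_measure K y} \<partial>lborel)"
  unfolding emeasure_compact_eq_nn_integral_slice_measure[OF assms]
  using assms by (intro nn_integral_layer_cake borel_measurable_slice_measure borel_compact)
    (auto simp: slice_measure_def)

lemma borel_measurable_emeasure_superlevel: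
  fixes g :: "'a::euclidean_space \<Rightarrow> real"
  assumes [measurable]: "g \<in> borel_measurable borel"
  shows "(\<lambda>r. emeasure lborel {y. r < g y}) \<in> borel_measurable (lborel :: real measure)"
proof -
  have "{p \<in> space (lborel \<Otimes>\<^sub>M lborel). fst p < g (snd p)}
      \<in> sets (lborel \<Otimes>\<^sub>M (lborel :: 'a measure))"
    by measurable
  from lborel.measurable_emeasure_Pair[OF this] show ?thesis
    by (simp add: vimage_def space_pair_measure)
qed

text \<open>The superlevel sets of the chord lengths of \<open>s K + (1 - s) L\<close> contain the convex
  combinations of those of \<open>K\<close> and \<open>L\<close>; integrating the one-dimensional inequality over the
  levels needs both families to be nonempty at the same levels.\<close>

lemma brunn_minkowski_plane_equal_max_chord:
  fixes K L M :: "(real \<times> real) set"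
  assumes K: "compact K" "convex K" and L: "compact L" "convex L" and M: "compact M"
    and s: "0 \<le> s" "s \<le> 1"
    and comb: "\<And>p q. p \<in> K \<Longrightarrow> q \<in> L \<Longrightarrow> s *\<^sub>R p + (1 - s) *\<^sub>R q \<in> M"
    and chords: "\<And>r. 0 \<le> r \<Longrightarrow> (\<exists>y. r < slice_measure K y) \<longleftrightarrow> (\<exists>y. r < slice_measure L y)"
  shows "ennreal s * emeasure lborel K + ennreal (1 - s) * emeasure lborel L \<le> emeasure lborel M"
proof -
  have [measurable]: "slice_measure K \<in> borel_measurable borel"
    "slice_measure L \<in> borel_measurable borel" "slice_measure M \<in> borel_measurable borel"
    using K L M by (auto intro: borel_measurable_slice_measure borel_compact)
  have levels: "ennreal s * emeasure lborel {y. r < slice_measure K y}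
      + ennreal (1 - s) * emeasure lborel {y. r < slice_measure L y}
      \<le> emeasure lborel {y. r < slice_measure M y}" if r: "0 \<le> r" for r
  proof (cases "\<exists>y. r < slice_measure K y")
    case False
    then show ?thesis using chords[OF r] by simp
  next
    case True
    show ?thesis
    proof (rule brunn_minkowski_interval)
      show "is_interval {y. r < slice_measure K y}" "is_interval {y. r < slice_measure L y}"
        using K L r by (simp_all add: is_interval_convex_1 convex_slice_measure_superlevel)
      show "bounded {y. r < slice_measure K y}" "bounded {y. r < slice_measure L y}"
        using K(1) L(1) r by (simp_all add: bounded_slice_measure_superlevel)
      show "{y. r < slice_measure K y} \<noteq> {}" "{y. r < slice_measure L y} \<noteq> {}"
        using True chords[OF r] by auto
      fix y1 y2 assume y: "y1 \<in> {y. r < slice_measure K y}" "y2 \<in> {y. r < slice_measure L y}"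
      have "Pair y1 -` K \<noteq> {}" "Pair y2 -` L \<noteq> {}"
        using y r by (auto simp: slice_measure_def)
      then have "s * slice_measure K y1 + (1 - s) * slice_measure L y2
          \<le> slice_measure M (s * y1 + (1 - s) * y2)"
        using slice_measure_convex_combination[OF K L M s comb] by blast
      moreover have "r < s * slice_measure K y1 + (1 - s) * slice_measure L y2"
        using convex_bound_lt[of "- slice_measure K y1" "- r" "- slice_measure L y2" s "1 - s"] y s
        by simp
      ultimately show "s * y1 + (1 - s) * y2 \<in> {y. r < slice_measure M y}" by simp
    qed (use s in \<open>auto simp: borel_compact\<close>)
  qed
  have "ennreal s * emeasure lborel K + ennreal (1 - s) * emeasure lborel L
      = ennreal s * (\<integral>\<^sup>+r\<in>{0..}. emeasure lborel {y. r < slice_measure K y} \<partial>lborel)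
        + ennreal (1 - s) * (\<integral>\<^sup>+r\<in>{0..}. emeasure lborel {y. r < slice_measure L y} \<partial>lborel)"
    using K(1) L(1) by (simp add: emeasure_compact_layer_cake)
  also have "\<dots> = (\<integral>\<^sup>+r\<in>{0..}. ennreal s * emeasure lborel {y. r < slice_measure K y}
          + ennreal (1 - s) * emeasure lborel {y. r < slice_measure L y} \<partial>lborel)"
    by (simp add: nn_integral_add nn_integral_cmult borel_measurable_emeasure_superlevel
        distrib_right mult.assoc)
  also have "\<dots> \<le> (\<integral>\<^sup>+r\<in>{0..}. emeasure lborel {y. r < slice_measure M y} \<partial>lborel)"
    by (intro nn_integral_mono) (auto simp: indicator_def levels)
  also have "\<dots> = emeasure lborel M"
    using M by (simp add: emeasure_compact_layer_cake)
  finally show ?thesis .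
qed

lemma emeasure_le_reflected_combination:
  fixes K M :: "(real \<times> real) set" and a :: "real \<times> real"
  assumes K: "compact K" "convex K" and M: "compact M" and s: "0 \<le> s" "s \<le> 1"
    and comb: "\<And>p q. p \<in> K \<Longrightarrow> q \<in> K \<Longrightarrow> s *\<^sub>R p + (1 - s) *\<^sub>R (a - q) \<in> M"
  shows "emeasure lborel K \<le> emeasure lborel M"
proof -
  define L where "L = (\<lambda>q. a - q) ` K"
  have "compact L"
    unfolding L_def
    by (rule compact_continuous_image[OF continuous_on_diff[OF continuous_on_const continuous_on_id]
        K(1)])
  moreover have "convex L"
    unfolding L_def using convex_affinity[OF K(2), of a "- 1"] by simp
  ultimately have L: "compact L" "convex L" .
  have fibre: "Pair y -` L = (\<lambda>x. snd a - x) ` (Pair (fst a - y) -` K)" for y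
  proof (intro set_eqI iffI)
    fix x assume "x \<in> Pair y -` L"
    then obtain q where "q \<in> K" "(y, x) = a - q" unfolding L_def by auto
    then show "x \<in> (\<lambda>x. snd a - x) ` (Pair (fst a - y) -` K)"
      by (intro image_eqI[where x="snd a - x"]) (auto simp: prod_eq_iff)
  next
    fix x assume "x \<in> (\<lambda>x. snd a - x) ` (Pair (fst a - y) -` K)"
    then obtain w where "(fst a - y, w) \<in> K" "x = snd a - w" by auto
    then show "x \<in> Pair y -` L"
      unfolding L_def by (auto intro!: image_eqI[where x="(fst a - y, w)"] simp: prod_eq_iff)
  qed
  have slices: "slice_measure L y = slice_measure K (fst a - y)" for y
    unfolding slice_measure_def measure_def fibre
    by (subst emeasure_lborel_reflect) (auto simp: borel_compact compact_Pair_vimage K)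
  have chords: "(\<exists>y. r < slice_measure K y) \<longleftrightarrow> (\<exists>y. r < slice_measure L y)" for r
  proof
    assume "\<exists>y. r < slice_measure K y"
    then obtain y where "r < slice_measure L (fst a - y)" by (auto simp: slices)
    then show "\<exists>y. r < slice_measure L y" ..
  qed (auto simp: slices)
  have "emeasure lborel L = emeasure lborel K"
    unfolding L_def using K by (simp add: emeasure_lborel_reflect borel_compact)
  moreover have "ennreal s * emeasure lborel K + ennreal (1 - s) * emeasure lborel L
      \<le> emeasure lborel M"
    by (rule brunn_minkowski_plane_equal_max_chord[OF K L M s])
      (use comb chords in \<open>auto simp: L_def\<close>)
  moreover have "ennreal s + ennreal (1 - s) = 1"
    using ennreal_plus[of s "1 - s"] s by simp
  ultimately show ?thesis
    by (metis distrib_right mult_1)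
qed

section \<open>Horizontal sections of a centrally symmetric convex body\<close>

lemma scaleR_2_diff_Pair:
  fixes c :: "real \<times> 'b::real_vector"
  shows "2 *\<^sub>R c - (z, w) = (2 * fst c - z, 2 *\<^sub>R snd c - w)"
  by (simp add: prod_eq_iff)

lemma slice_measure_eq_0_outside:
  fixes T :: "(real \<times> 'b::euclidean_space) set"
  assumes symmetric: "\<And>q. q \<in> T \<Longrightarrow> 2 *\<^sub>R c - q \<in> T"
    and nonneg: "\<And>q. q \<in> T \<Longrightarrow> 0 \<le> fst q"
    and z: "z < 0 \<or> 2 * fst c < z"
  shows "slice_measure T z = 0"
proof -
  have "Pair z -` T = {}"
  proof safe
    fix w assume "(z, w) \<in> T"
    with nonneg[OF this] nonneg[OF symmetric[OF this]] z show "w \<in> {}"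
      by (simp add: scaleR_2_diff_Pair)
  qed
  then show ?thesis by (simp add: slice_measure_def)
qed

lemma Pair_vimage_reflect:
  fixes T :: "(real \<times> 'b::real_vector) set"
  assumes "\<And>q. q \<in> T \<Longrightarrow> 2 *\<^sub>R c - q \<in> T"
  shows "Pair (2 * fst c - z) -` T = (\<lambda>w. 2 *\<^sub>R snd c - w) ` (Pair z -` T)"
proof (intro set_eqI iffI)
  fix w assume "w \<in> Pair (2 * fst c - z) -` T"
  from assms[OF this[simplified]] show "w \<in> (\<lambda>w. 2 *\<^sub>R snd c - w) ` (Pair z -` T)"
    by (intro image_eqI[where x="2 *\<^sub>R snd c - w"]) (auto simp: scaleR_2_diff_Pair)
next
  fix w assume "w \<in> (\<lambda>w. 2 *\<^sub>R snd c - w) ` (Pair z -` T)"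
  then obtain v where "(z, v) \<in> T" "w = 2 *\<^sub>R snd c - v" by auto
  with assms show "w \<in> Pair (2 * fst c - z) -` T"
    by (force simp: scaleR_2_diff_Pair)
qed

lemma slice_measure_reflect:
  fixes T :: "(real \<times> 'b::euclidean_space) set"
  assumes "compact T" and "\<And>q. q \<in> T \<Longrightarrow> 2 *\<^sub>R c - q \<in> T"
  shows "slice_measure T (2 * fst c - z) = slice_measure T z"
proof -
  have "Pair (2 * fst c - z) -` T = (\<lambda>w. 2 *\<^sub>R snd c - w) ` (Pair z -` T)"
    using assms(2) by (rule Pair_vimage_reflect)
  then show ?thesis
    unfolding slice_measure_def measure_def
    using assms(1) by (simp add: emeasure_lborel_reflect borel_compact compact_Pair_vimage)
qed

lemma slice_measure_mono:
  fixes T :: "(real \<times> (real \<times> real)) set"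
  assumes T: "compact T" "convex T" and symmetric: "\<And>q. q \<in> T \<Longrightarrow> 2 *\<^sub>R c - q \<in> T"
    and z: "z1 \<le> z2" "z2 \<le> fst c"
  shows "slice_measure T z1 \<le> slice_measure T z2"
proof (cases "z1 = fst c")
  case True
  then show ?thesis using z by simp
next
  case False
  define h where "h = fst c"
  define s where "s = (2 * h - z1 - z2) / (2 * h - 2 * z1)"
  have "z1 < h" using z False by (simp add: h_def)
  then have s: "0 \<le> s" "s \<le> 1" and "s * (2 * h - 2 * z1) = 2 * h - z1 - z2"
    using z by (auto simp: s_def h_def field_simps)
  then have sz: "s * z1 + (1 - s) * (2 * h - z1) = z2"
    by (simp add: algebra_simps)
  have "emeasure lborel (Pair z1 -` T) \<le> emeasure lborel (Pair z2 -` T)"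
  proof (rule emeasure_le_reflected_combination[where s=s and a="2 *\<^sub>R snd c"])
    fix p q assume "p \<in> Pair z1 -` T" "q \<in> Pair z1 -` T"
    moreover have "(2 * h - z1, 2 *\<^sub>R snd c - q) \<in> T"
      using symmetric[of "(z1, q)"] \<open>q \<in> Pair z1 -` T\<close> by (simp add: h_def scaleR_2_diff_Pair)
    ultimately have "s *\<^sub>R (z1, p) + (1 - s) *\<^sub>R (2 * h - z1, 2 *\<^sub>R snd c - q) \<in> T"
      using s by (intro convexD[OF T(2)]) auto
    then show "s *\<^sub>R p + (1 - s) *\<^sub>R (2 *\<^sub>R snd c - q) \<in> Pair z2 -` T"
      using sz by simp
  qed (use T s in \<open>auto simp: compact_Pair_vimage convex_Pair_vimage\<close>)
  then show ?thesis
    using T(1) by (simp add: emeasure_Pair_vimage_compact)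
qed

section \<open>Weighted integrals of a symmetric unimodal profile\<close>

lemma inv_sqrt_eq_powr:
  fixes x :: real
  assumes "0 \<le> x"
  shows "1 / sqrt x = x powr (- (1 / 2))"
  using assms by (cases "x = 0") (simp_all add: powr_minus_divide powr_half_sqrt)

definition inv_sqrt_weight :: "real \<Rightarrow> real \<Rightarrow> real" where
  "inv_sqrt_weight h z = 1 / sqrt z + 1 / sqrt (2 * h - z)"

lemma inv_sqrt_weight_reflect [simp]: "inv_sqrt_weight h (2 * h - z) = inv_sqrt_weight h z"
  by (simp add: inv_sqrt_weight_def)

lemma inv_sqrt_weight_nonneg: "0 \<le> z \<Longrightarrow> z \<le> 2 * h \<Longrightarrow> 0 \<le> inv_sqrt_weight h z"
  by (simp add: inv_sqrt_weight_def)

lemma borel_measurable_inv_sqrt_weight [measurable]: "inv_sqrt_weight h \<in> borel_measurable borel"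
  unfolding inv_sqrt_weight_def[abs_def] by measurable

lemma inv_sqrt_weight_ge:
  fixes h z :: real
  assumes "0 < z" "z < 2 * h"
  shows "2 / sqrt h \<le> inv_sqrt_weight h z"
proof -
  define u where "u = sqrt z"
  define v where "v = sqrt (2 * h - z)"
  have u: "0 < u" and v: "0 < v" and h: "0 < h" using assms by (auto simp: u_def v_def)
  have "0 \<le> (u - v)\<^sup>2" by simp
  then have square: "(u + v)\<^sup>2 \<le> 2 * (u\<^sup>2 + v\<^sup>2)" and am_gm: "4 * (u * v) \<le> (u + v) * (u + v)"
    by (simp_all add: power2_eq_square algebra_simps)
  have "u\<^sup>2 + v\<^sup>2 = 2 * h" using assms by (simp add: u_def v_def)
  with square h have "(u + v)\<^sup>2 \<le> (2 * sqrt h)\<^sup>2" by (simp add: power_mult_distrib)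
  then have "u + v \<le> 2 * sqrt h" by (rule power2_le_imp_le) (use h in simp)
  then have "2 / sqrt h \<le> 4 / (u + v)"
    using u v h by (simp add: divide_simps)
  also have "\<dots> \<le> (u + v) / (u * v)"
    using am_gm u v by (simp add: divide_simps)
  also have "\<dots> = 1 / u + 1 / v"
    using u v by (simp add: field_simps)
  finally show ?thesis by (simp add: u_def v_def inv_sqrt_weight_def)
qed

lemma inv_sqrt_weight_antimono:
  fixes h x y :: real
  assumes "0 < x" "x \<le> y" "y \<le> h"
  shows "inv_sqrt_weight h y \<le> inv_sqrt_weight h x"
proof -
  define G where "G t = t powr (- (1 / 2)) + (2 * h - t) powr (- (1 / 2))" for t :: real
  have "G y \<le> G x"
  proof (rule DERIV_nonpos_imp_nonincreasing[OF assms(2)])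
    fix t assume t: "x \<le> t" "t \<le> y"
    then have "0 < t" "t \<le> 2 * h - t" using assms by auto
    have "(G has_real_derivative (- (1 / 2)) * t powr (- (1 / 2) - 1)
        + (- (1 / 2)) * (2 * h - t) powr (- (1 / 2) - 1) * (- 1)) (at t)"
      unfolding G_def using \<open>0 < t\<close> \<open>t \<le> 2 * h - t\<close>
      by (auto intro!: derivative_eq_intros)
    moreover have "(2 * h - t) powr (- (1 / 2) - 1) \<le> t powr (- (1 / 2) - 1)"
      using \<open>0 < t\<close> \<open>t \<le> 2 * h - t\<close> by (intro powr_mono2') auto
    ultimately show "\<exists>D. (G has_real_derivative D) (at t) \<and> D \<le> 0"
      by (intro exI conjI) auto
  qed
  then show ?thesis
    using assms by (simp add: G_def inv_sqrt_eq_powr inv_sqrt_weight_def)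
qed

lemma inv_sqrt_weight_crossing:
  fixes h :: real
  assumes "0 < h"
  obtains z0 where "0 < z0" "z0 \<le> h" "inv_sqrt_weight h z0 = 2 * sqrt 2 / sqrt h"
proof -
  have "continuous_on {h / 8..h} (\<lambda>t. t powr (- (1 / 2)) + (2 * h - t) powr (- (1 / 2)))"
    using assms by (intro continuous_intros) auto
  then have "continuous_on {h / 8..h} (inv_sqrt_weight h)"
    by (rule continuous_on_eq) (use assms in \<open>auto simp: inv_sqrt_eq_powr inv_sqrt_weight_def\<close>)
  moreover have "inv_sqrt_weight h h \<le> 2 * sqrt 2 / sqrt h"
    using assms by (simp add: inv_sqrt_weight_def divide_right_mono)
  moreover have "sqrt (h / 8) = sqrt h / (2 * sqrt 2)"
    using real_sqrt_mult[of 4 2] by (simp add: real_sqrt_divide)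
  then have "2 * sqrt 2 / sqrt h \<le> inv_sqrt_weight h (h / 8)"
    using assms by (simp add: inv_sqrt_weight_def)
  ultimately obtain z0 where "h / 8 \<le> z0" "z0 \<le> h" "inv_sqrt_weight h z0 = 2 * sqrt 2 / sqrt h"
    using IVT2'[of "inv_sqrt_weight h" h "2 * sqrt 2 / sqrt h" "h / 8"] assms by auto
  moreover have "0 < z0" using \<open>h / 8 \<le> z0\<close> assms by simp
  ultimately show ?thesis using that by blast
qed

lemma nn_integral_reflect_real:
  fixes f :: "real \<Rightarrow> ennreal"
  assumes "f \<in> borel_measurable borel"
  shows "(\<integral>\<^sup>+z. f (t - z) \<partial>lborel) = (\<integral>\<^sup>+z. f z \<partial>lborel)"
  using nn_integral_real_affine[OF assms, of "- 1" t] by simp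

lemma nn_integral_inv_sqrt_weight:
  fixes h :: real
  assumes "0 < h"
  shows "(\<integral>\<^sup>+z\<in>{0..2 * h}. ennreal (inv_sqrt_weight h z) \<partial>lborel) = ennreal (4 * sqrt (2 * h))"
proof -
  have "((\<lambda>z. z powr (- (1 / 2))) has_integral (2 * h) powr (- (1 / 2) + 1) / (- (1 / 2) + 1))
      {0..2 * h}"
    using assms by (intro has_integral_powr_from_0) auto
  then have "((\<lambda>z. z powr (- (1 / 2))) has_integral 2 * sqrt (2 * h)) {0..2 * h}"
    using assms by (simp add: powr_half_sqrt mult.commute)
  then have "((\<lambda>z. 1 / sqrt z) has_integral 2 * sqrt (2 * h)) {0..2 * h}"
    by (rule has_integral_eq[rotated]) (simp add: inv_sqrt_eq_powr)
  then have left: "(\<integral>\<^sup>+z\<in>{0..2 * h}. ennreal (1 / sqrt z) \<partial>lborel) = ennreal (2 * sqrt (2 * h))"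
    by (intro nn_integral_has_integral_lebesgue') auto
  have "(\<integral>\<^sup>+z\<in>{0..2 * h}. ennreal (1 / sqrt (2 * h - z)) \<partial>lborel)
      = (\<integral>\<^sup>+z. ennreal (1 / sqrt (2 * h - z)) * indicator {0..2 * h} (2 * h - z) \<partial>lborel)"
    by (intro nn_integral_cong) (auto simp: indicator_def)
  also have "\<dots> = (\<integral>\<^sup>+z\<in>{0..2 * h}. ennreal (1 / sqrt z) \<partial>lborel)"
    by (rule nn_integral_reflect_real[where f="\<lambda>z. ennreal (1 / sqrt z) * indicator {0..2 * h} z"])
      simp
  finally have right: "(\<integral>\<^sup>+z\<in>{0..2 * h}. ennreal (1 / sqrt (2 * h - z)) \<partial>lborel)
      = ennreal (2 * sqrt (2 * h))"
    using left by simp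
  have "(\<integral>\<^sup>+z\<in>{0..2 * h}. ennreal (inv_sqrt_weight h z) \<partial>lborel)
      = (\<integral>\<^sup>+z. ennreal (1 / sqrt z) * indicator {0..2 * h} z
          + ennreal (1 / sqrt (2 * h - z)) * indicator {0..2 * h} z \<partial>lborel)"
    by (intro nn_integral_cong) (auto simp: indicator_def inv_sqrt_weight_def)
  also have "\<dots> = ennreal (4 * sqrt (2 * h))"
    using left right assms by (simp add: nn_integral_add numeral_mult_ennreal flip: mult_2)
  finally show ?thesis .
qed

lemma AE_in_Ioo_or_notin_Icc: "AE x in lborel. x \<in> {a<..<b} \<or> x \<notin> {a..b :: real}"
  using AE_lborel_singleton[of a] AE_lborel_singleton[of b] by eventually_elim auto

locale symmetric_profile =
  fixes h :: real and a :: "real \<Rightarrow> real"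
  assumes h_pos: "0 < h"
    and measurable [measurable]: "a \<in> borel_measurable borel"
    and nonneg: "\<And>z. 0 \<le> a z"
    and support: "\<And>z. z < 0 \<or> 2 * h < z \<Longrightarrow> a z = 0"
    and symmetric: "\<And>z. a (2 * h - z) = a z"
begin

lemma nn_integral_inv_sqrt_symmetrize:
  "2 * (\<integral>\<^sup>+z. ennreal (a z / sqrt z) \<partial>lborel)
    = (\<integral>\<^sup>+z\<in>{0..2 * h}. ennreal (a z * inv_sqrt_weight h z) \<partial>lborel)"
proof -
  have "(\<integral>\<^sup>+z. ennreal (a z / sqrt (2 * h - z)) \<partial>lborel)
      = (\<integral>\<^sup>+z. ennreal (a (2 * h - z) / sqrt (2 * h - z)) \<partial>lborel)"
    by (simp add: symmetric)
  also have "\<dots> = (\<integral>\<^sup>+z. ennreal (a z / sqrt z) \<partial>lborel)"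
    by (rule nn_integral_reflect_real) simp
  finally have "2 * (\<integral>\<^sup>+z. ennreal (a z / sqrt z) \<partial>lborel)
      = (\<integral>\<^sup>+z. ennreal (a z / sqrt z) \<partial>lborel) + (\<integral>\<^sup>+z. ennreal (a z / sqrt (2 * h - z)) \<partial>lborel)"
    by (metis mult_2)
  also have "\<dots> = (\<integral>\<^sup>+z. ennreal (a z / sqrt z) + ennreal (a z / sqrt (2 * h - z)) \<partial>lborel)"
    by (rule nn_integral_add[symmetric]) simp_all
  also have "\<dots> = (\<integral>\<^sup>+z\<in>{0..2 * h}. ennreal (a z * inv_sqrt_weight h z) \<partial>lborel)"
  proof (intro nn_integral_cong)
    fix z
    show "ennreal (a z / sqrt z) + ennreal (a z / sqrt (2 * h - z))
        = ennreal (a z * inv_sqrt_weight h z) * indicator {0..2 * h} z"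
    proof (cases "0 \<le> z \<and> z \<le> 2 * h")
      case True
      then show ?thesis
        using nonneg[of z] by (simp add: inv_sqrt_weight_def distrib_left flip: ennreal_plus)
    next
      case False
      then show ?thesis using support[of z] by auto
    qed
  qed
  finally show ?thesis .
qed

lemma nn_integral_inv_sqrt_ge:
  assumes V: "(\<integral>\<^sup>+z. ennreal (a z) \<partial>lborel) = ennreal V" "0 \<le> V"
  shows "ennreal (V / sqrt h) \<le> (\<integral>\<^sup>+z. ennreal (a z / sqrt z) \<partial>lborel)"
proof -
  have "2 * ennreal (V / sqrt h) = (\<integral>\<^sup>+z. ennreal (a z) * ennreal (2 / sqrt h) \<partial>lborel)"
    using V h_pos by (simp add: nn_integral_multc numeral_mult_ennreal ennreal_mult[symmetric])
  also have "\<dots> \<le> (\<integral>\<^sup>+z\<in>{0..2 * h}. ennreal (a z * inv_sqrt_weight h z) \<partial>lborel)"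
  proof (rule nn_integral_mono_AE)
    show "AE z in lborel. ennreal (a z) * ennreal (2 / sqrt h)
        \<le> ennreal (a z * inv_sqrt_weight h z) * indicator {0..2 * h} z"
      using AE_in_Ioo_or_notin_Icc[of 0 "2 * h"]
    proof eventually_elim
      fix z assume "z \<in> {0<..<2 * h} \<or> z \<notin> {0..2 * h}"
      then consider "0 < z" "z < 2 * h" | "a z = 0"
        using support by fastforce
      then show "ennreal (a z) * ennreal (2 / sqrt h)
          \<le> ennreal (a z * inv_sqrt_weight h z) * indicator {0..2 * h} z"
      proof cases
        case 1
        then have "a z * (2 / sqrt h) \<le> a z * inv_sqrt_weight h z"
          using nonneg[of z] inv_sqrt_weight_ge[of z h] by (intro mult_left_mono) auto
        with 1 show ?thesis
          using nonneg[of z] by (simp add: ennreal_mult'[symmetric] ennreal_leI)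
      qed simp
    qed
  qed
  also have "\<dots> = 2 * (\<integral>\<^sup>+z. ennreal (a z / sqrt z) \<partial>lborel)"
    by (rule nn_integral_inv_sqrt_symmetrize[symmetric])
  finally show ?thesis
    by (simp add: ennreal_mult_le_mult_iff)
qed

lemma profile_weight_rearrangement:
  assumes mono: "\<And>z1 z2. 0 \<le> z1 \<Longrightarrow> z1 \<le> z2 \<Longrightarrow> z2 \<le> h \<Longrightarrow> a z1 \<le> a z2"
    and z0: "0 < z0" "z0 \<le> h" and z: "0 < z" "z < 2 * h"
  shows "a z * inv_sqrt_weight h z + a z0 * inv_sqrt_weight h z0
    \<le> a z * inv_sqrt_weight h z0 + a z0 * inv_sqrt_weight h z"
proof -
  have half: "(a z - a z0) * (inv_sqrt_weight h z - inv_sqrt_weight h z0) \<le> 0"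
    if "0 < z" "z \<le> h" for z
  proof (cases "z \<le> z0")
    case True
    then show ?thesis
      using mono[of z z0] inv_sqrt_weight_antimono[of z z0 h] that z0
      by (intro mult_nonpos_nonneg) auto
  next
    case False
    then show ?thesis
      using mono[of z0 z] inv_sqrt_weight_antimono[of z0 z h] that z0
      by (intro mult_nonneg_nonpos) auto
  qed
  have "(a z - a z0) * (inv_sqrt_weight h z - inv_sqrt_weight h z0) \<le> 0"
  proof (cases "z \<le> h")
    case True
    then show ?thesis using half z by blast
  next
    case False
    then show ?thesis using half[of "2 * h - z"] z by (simp add: symmetric)
  qed
  then show ?thesis by (simp add: algebra_simps)
qed

lemma nn_integral_profile_weight_rearrangement:
  assumes mono: "\<And>z1 z2. 0 \<le> z1 \<Longrightarrow> z1 \<le> z2 \<Longrightarrow> z2 \<le> h \<Longrightarrow> a z1 \<le> a z2"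
    and z0: "0 < z0" "z0 \<le> h"
  shows "(\<integral>\<^sup>+z\<in>{0..2 * h}. ennreal (a z * inv_sqrt_weight h z) \<partial>lborel)
      + ennreal (a z0 * inv_sqrt_weight h z0) * ennreal (2 * h)
    \<le> (\<integral>\<^sup>+z\<in>{0..2 * h}. ennreal (a z * inv_sqrt_weight h z0) \<partial>lborel)
      + ennreal (a z0) * (\<integral>\<^sup>+z\<in>{0..2 * h}. ennreal (inv_sqrt_weight h z) \<partial>lborel)"
proof -
  let ?w = "inv_sqrt_weight h"
  have w0: "0 \<le> ?w z0" using z0 by (simp add: inv_sqrt_weight_nonneg)
  have "(\<integral>\<^sup>+z\<in>{0..2 * h}. ennreal (a z * ?w z) + ennreal (a z0 * ?w z0) \<partial>lborel)
      \<le> (\<integral>\<^sup>+z\<in>{0..2 * h}. ennreal (a z * ?w z0) + ennreal (a z0 * ?w z) \<partial>lborel)"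
  proof (rule nn_integral_mono_AE)
    show "AE z in lborel. (ennreal (a z * ?w z) + ennreal (a z0 * ?w z0)) * indicator {0..2 * h} z
        \<le> (ennreal (a z * ?w z0) + ennreal (a z0 * ?w z)) * indicator {0..2 * h} z"
      using AE_in_Ioo_or_notin_Icc[of 0 "2 * h"]
    proof eventually_elim
      fix z assume "z \<in> {0<..<2 * h} \<or> z \<notin> {0..2 * h}"
      then consider "0 < z" "z < 2 * h" | "z \<notin> {0..2 * h}" by fastforce
      then show "(ennreal (a z * ?w z) + ennreal (a z0 * ?w z0)) * indicator {0..2 * h} z
          \<le> (ennreal (a z * ?w z0) + ennreal (a z0 * ?w z)) * indicator {0..2 * h} z"
      proof cases
        case 1
        then show ?thesis
          using profile_weight_rearrangement[OF mono z0 1] nonneg[of z] nonneg[of z0] w0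
            inv_sqrt_weight_nonneg[of z h]
          by (simp add: ennreal_leI flip: ennreal_plus)
      qed (auto simp: indicator_def)
    qed
  qed
  then show ?thesis
    using h_pos nonneg[of z0]
    by (simp add: distrib_right nn_integral_add nn_integral_cmult_indicator nn_integral_cmult
        ennreal_mult' mult.assoc)
qed

lemma nn_integral_inv_sqrt_le:
  assumes mono: "\<And>z1 z2. 0 \<le> z1 \<Longrightarrow> z1 \<le> z2 \<Longrightarrow> z2 \<le> h \<Longrightarrow> a z1 \<le> a z2"
    and V: "(\<integral>\<^sup>+z. ennreal (a z) \<partial>lborel) = ennreal V" "0 \<le> V"
  shows "(\<integral>\<^sup>+z. ennreal (a z / sqrt z) \<partial>lborel) \<le> ennreal (sqrt 2 * V / sqrt h)"
proof -
  define c where "c = 2 * sqrt 2 / sqrt h"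
  have c: "0 < c" using h_pos by (simp add: c_def)
  obtain z0 where z0: "0 < z0" "z0 \<le> h" "inv_sqrt_weight h z0 = c"
    using inv_sqrt_weight_crossing[OF h_pos] unfolding c_def by blast
  define X where "X = ennreal (a z0) * ennreal (4 * sqrt (2 * h))"
  have "c * (2 * h) = 4 * sqrt (2 * h)"
    using h_pos by (simp add: c_def real_sqrt_mult field_simps)
  then have X: "ennreal (a z0 * c) * ennreal (2 * h) = X"
    using nonneg[of z0] c h_pos by (simp add: X_def ennreal_mult'[symmetric] mult.assoc)
  have "X \<noteq> top"
    by (simp add: X_def ennreal_mult_eq_top_iff)
  then have "(\<integral>\<^sup>+z\<in>{0..2 * h}. ennreal (a z * inv_sqrt_weight h z) \<partial>lborel)
      \<le> (\<integral>\<^sup>+z\<in>{0..2 * h}. ennreal (a z * c) \<partial>lborel)"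
    using nn_integral_profile_weight_rearrangement[OF mono z0(1,2)] h_pos
    by (simp add: z0(3) X nn_integral_inv_sqrt_weight X_def[symmetric])
  also have "\<dots> \<le> (\<integral>\<^sup>+z. ennreal (a z) * ennreal c \<partial>lborel)"
    using nonneg c by (intro nn_integral_mono) (auto simp: indicator_def ennreal_mult)
  finally have "2 * (\<integral>\<^sup>+z. ennreal (a z / sqrt z) \<partial>lborel) \<le> ennreal (V * c)"
    using V c by (simp add: nn_integral_inv_sqrt_symmetrize nn_integral_multc ennreal_mult)
  also have "\<dots> = 2 * ennreal (sqrt 2 * V / sqrt h)"
    using V(2) h_pos by (simp add: c_def numeral_mult_ennreal mult_ac)
  finally show ?thesis
    by (simp add: ennreal_mult_le_mult_iff)
qed

end

lemma nn_integral_inv_sqrt_height_bounds: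
  fixes T :: "(real \<times> (real \<times> real)) set" and c :: "real \<times> (real \<times> real)"
  assumes T: "compact T" "convex T"
    and central: "\<And>q. q \<in> T \<Longrightarrow> 2 *\<^sub>R c - q \<in> T"
    and nonneg: "\<And>q. q \<in> T \<Longrightarrow> 0 \<le> fst q"
    and height: "0 < fst c"
  shows "ennreal (measure lborel T / sqrt (fst c))
      \<le> (\<integral>\<^sup>+q\<in>T. ennreal (1 / sqrt (fst q)) \<partial>lborel)"
    and "(\<integral>\<^sup>+q\<in>T. ennreal (1 / sqrt (fst q)) \<partial>lborel)
      \<le> ennreal (sqrt 2 * measure lborel T / sqrt (fst c))"
proof -
  interpret symmetric_profile "fst c" "slice_measure T"
  proof
    show "slice_measure T \<in> borel_measurable borel"
      by (intro borel_measurable_slice_measure borel_compact T(1))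
    show "slice_measure T z = 0" if "z < 0 \<or> 2 * fst c < z" for z
      using central nonneg that by (rule slice_measure_eq_0_outside)
    show "slice_measure T (2 * fst c - z) = slice_measure T z" for z
      by (rule slice_measure_reflect[OF T(1) central])
  qed (simp_all add: height)
  have V: "(\<integral>\<^sup>+z. ennreal (slice_measure T z) \<partial>lborel) = ennreal (measure lborel T)"
    using T(1) emeasure_compact_finite[OF T(1)]
    by (simp add: emeasure_compact_eq_nn_integral_slice_measure[symmetric]
        emeasure_eq_ennreal_measure less_top)
  have "(\<integral>\<^sup>+q\<in>T. ennreal (1 / sqrt (fst q)) \<partial>lborel)
      = (\<integral>\<^sup>+z. ennreal (slice_measure T z / sqrt z) \<partial>lborel)"
    using nn_integral_compact_eq_slice_measure[OF T(1), of "\<lambda>z. ennreal (1 / sqrt z)"]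
    by (simp add: ennreal_mult'[symmetric] mult.commute)
  moreover note nn_integral_inv_sqrt_ge[OF V measure_nonneg]
    nn_integral_inv_sqrt_le[OF slice_measure_mono[OF T central] V measure_nonneg]
  ultimately show "ennreal (measure lborel T / sqrt (fst c))
      \<le> (\<integral>\<^sup>+q\<in>T. ennreal (1 / sqrt (fst q)) \<partial>lborel)"
    and "(\<integral>\<^sup>+q\<in>T. ennreal (1 / sqrt (fst q)) \<partial>lborel)
      \<le> ennreal (sqrt 2 * measure lborel T / sqrt (fst c))"
    by simp_all
qed

section \<open>From the product space to three-dimensional space\<close>

definition height_split :: "real^3 \<Rightarrow> real \<times> (real \<times> real)" where
  "height_split p = (p $ 3, (p $ 1, p $ 2))"

definition height_join :: "real \<times> (real \<times> real) \<Rightarrow> real^3" where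
  "height_join q = vector [fst (snd q), snd (snd q), fst q]"

lemma height_join_split [simp]: "height_join (height_split p) = p"
  by (simp add: vec_eq_iff forall_3 height_join_def height_split_def)

lemma height_split_join [simp]: "height_split (height_join q) = q"
  by (simp add: height_join_def height_split_def)

lemma height_join_nth_3 [simp]: "height_join q $ 3 = fst q"
  by (simp add: height_join_def)

lemma linear_height_split: "linear height_split"
  by (rule linearI) (simp_all add: height_split_def)

lemma linear_height_join: "linear height_join"
  by (rule linearI) (simp_all add: height_join_def vec_eq_iff forall_3)

lemma borel_measurable_height_join [measurable]: "height_join \<in> borel_measurable borel"
  using linear_height_join
  by (intro borel_measurable_continuous_onI linear_continuous_on)
    (simp add: linear_conv_bounded_linear)

lemma prod_UNIV_3: "prod f (UNIV :: 3 set) = f 1 * f 2 * f 3"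
  unfolding UNIV_3 by (simp add: ac_simps)

lemma emeasure_lborel_Times:
  fixes A :: "'a::euclidean_space set" and B :: "'b::euclidean_space set"
  assumes "A \<in> sets borel" "B \<in> sets borel"
  shows "emeasure lborel (A \<times> B) = emeasure lborel A * emeasure lborel B"
  using assms by (subst lborel_prod[symmetric]) (simp add: lborel.emeasure_pair_measure_Times)

lemma distr_lborel_height_join: "distr lborel borel height_join = lborel"
proof -
  have "(lborel :: (real^3) measure) = distr lborel borel height_join"
  proof (rule lborel_eqI)
    fix l u :: "real^3" assume lu: "\<And>b. b \<in> Basis \<Longrightarrow> l \<bullet> b \<le> u \<bullet> b"
    have le: "l $ i \<le> u $ i" for i
      using lu[of "axis i 1"] by (simp add: inner_axis)
    have "height_join -` box l u = {l$3<..<u$3} \<times> ({l$1<..<u$1} \<times> {l$2<..<u$2})"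
      by (auto simp: mem_box_cart forall_3 height_join_def)
    then have "emeasure (distr lborel borel height_join) (box l u)
        = emeasure lborel ({l$3<..<u$3} \<times> ({l$1<..<u$1} \<times> {l$2<..<u$2}))"
      by (simp add: emeasure_distr)
    also have "\<dots> = ennreal ((u$1 - l$1) * (u$2 - l$2) * (u$3 - l$3))"
      using le[of 1] le[of 2] le[of 3]
      by (simp add: emeasure_lborel_Times borel_open open_Times ennreal_mult[symmetric] mult_ac)
    also have "\<dots> = ennreal (prod (\<lambda>i. u $ i - l $ i) UNIV)"
      by (simp add: prod_UNIV_3)
    also have "prod (\<lambda>i. u $ i - l $ i) UNIV = Henstock_Kurzweil_Integration.content (cbox l u)"
      by (rule content_cbox_cart[symmetric]) (use lu in \<open>auto simp: box_ne_empty\<close>)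
    also have "\<dots> = (\<Prod>b\<in>Basis. (u - l) \<bullet> b)"
      using lu by (simp add: content_cbox inner_diff_left)
    finally show "emeasure (distr lborel borel height_join) (box l u) = (\<Prod>b\<in>Basis. (u - l) \<bullet> b)" .
  qed simp
  then show ?thesis by simp
qed

lemma nn_integral_height_join:
  assumes "g \<in> borel_measurable borel"
  shows "(\<integral>\<^sup>+p. g p \<partial>lborel) = (\<integral>\<^sup>+q. g (height_join q) \<partial>lborel)"
  using assms nn_integral_distr[of height_join lborel borel g]
  by (simp add: distr_lborel_height_join)

lemma height_split_image_eq_vimage: "height_split ` S = height_join -` S"
  by (force intro: image_eqI[where x="height_join _"])

lemma nn_integral_inv_sqrt_third_coordinate_bounds:
  fixes S :: "(real^3) set" and C :: "real^3"
  assumes S: "compact S" "convex S"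
    and central: "\<And>P. P \<in> S \<Longrightarrow> 2 *\<^sub>R C - P \<in> S"
    and nonneg: "\<And>P. P \<in> S \<Longrightarrow> 0 \<le> P $ 3"
    and height: "0 < C $ 3"
  shows "ennreal (measure lborel S / sqrt (C $ 3))
      \<le> (\<integral>\<^sup>+p\<in>S. ennreal (1 / sqrt (p $ 3)) \<partial>lborel)"
    and "(\<integral>\<^sup>+p\<in>S. ennreal (1 / sqrt (p $ 3)) \<partial>lborel)
      \<le> ennreal (sqrt 2 * measure lborel S / sqrt (C $ 3))"
proof -
  define T where "T = height_split ` S"
  have "bounded_linear height_split"
    using linear_height_split by (simp add: linear_conv_bounded_linear)
  then have T: "compact T" "convex T"
    unfolding T_def using S linear_height_split
    by (auto intro: compact_continuous_image linear_continuous_on convex_linear_image)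
  have "2 *\<^sub>R height_split C - q \<in> T" if "q \<in> T" for q
  proof -
    obtain P where "P \<in> S" "q = height_split P" using \<open>q \<in> T\<close> unfolding T_def by blast
    moreover have "2 *\<^sub>R height_split C - height_split P = height_split (2 *\<^sub>R C - P)"
      using linear_height_split by (simp add: linear_diff linear_scale)
    ultimately show ?thesis using central unfolding T_def by auto
  qed
  moreover have "0 \<le> fst q" if "q \<in> T" for q
    using that nonneg by (auto simp: T_def height_split_def)
  moreover have "fst (height_split C) = C $ 3"
    by (simp add: height_split_def)
  moreover have "emeasure lborel T = emeasure lborel S"
    using nn_integral_height_join[of "indicator S"] borel_compact[OF S(1)]
      measurable_sets_borel[OF borel_measurable_height_join borel_compact[OF S(1)]]
    by (simp add: T_def height_split_image_eq_vimage indicator_vimage[symmetric]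
        del: indicator_vimage)
  moreover have "(\<integral>\<^sup>+q\<in>T. ennreal (1 / sqrt (fst q)) \<partial>lborel)
      = (\<integral>\<^sup>+p\<in>S. ennreal (1 / sqrt (p $ 3)) \<partial>lborel)"
    using nn_integral_height_join[of "\<lambda>p. ennreal (1 / sqrt (p $ 3)) * indicator S p"]
      borel_compact[OF S(1)]
    by (simp add: T_def height_split_image_eq_vimage indicator_vimage[symmetric]
        del: indicator_vimage)
  ultimately show "ennreal (measure lborel S / sqrt (C $ 3))
      \<le> (\<integral>\<^sup>+p\<in>S. ennreal (1 / sqrt (p $ 3)) \<partial>lborel)"
    and "(\<integral>\<^sup>+p\<in>S. ennreal (1 / sqrt (p $ 3)) \<partial>lborel)
      \<le> ennreal (sqrt 2 * measure lborel S / sqrt (C $ 3))"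
    using nn_integral_inv_sqrt_height_bounds[OF T, of "height_split C"] height
    by (simp_all add: measure_def)
qed

lemma integral_bounds_of_nn_integral_bounds:
  fixes f :: "'a::euclidean_space \<Rightarrow> real"
  assumes S [measurable]: "S \<in> sets borel" and f [measurable]: "f \<in> borel_measurable borel"
    and nonneg: "\<And>x. x \<in> S \<Longrightarrow> 0 \<le> f x"
    and lower: "ennreal l \<le> (\<integral>\<^sup>+x\<in>S. ennreal (f x) \<partial>lborel)"
    and upper: "(\<integral>\<^sup>+x\<in>S. ennreal (f x) \<partial>lborel) \<le> ennreal u" and "0 \<le> u"
  shows "l \<le> integral S f" and "integral S f \<le> u"
proof -
  have "(\<integral>\<^sup>+x\<in>S. ennreal (f x) \<partial>lborel) < top"
    using upper ennreal_less_top by (rule le_less_trans)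
  then obtain r where r: "0 \<le> r" "(\<integral>\<^sup>+x\<in>S. ennreal (f x) \<partial>lborel) = ennreal r"
    unfolding less_top_ennreal by blast
  have "(\<integral>\<^sup>+x. ennreal (if x \<in> S then f x else 0) \<partial>lborel) = (\<integral>\<^sup>+x\<in>S. ennreal (f x) \<partial>lborel)"
    by (intro nn_integral_cong) (simp add: indicator_def)
  with r have "((\<lambda>x. if x \<in> S then f x else 0) has_integral r) UNIV"
    using nonneg S by (intro nn_integral_has_integral measurable_If_set) auto
  then have "integral S f = r"
    using integral_restrict_UNIV[of S f] integral_unique by metis
  then show "l \<le> integral S f" and "integral S f \<le> u"
    using lower upper r \<open>0 \<le> u\<close> by simp_all
qed

theorem theorem1:
  fixes S :: "(real^3) set" and C :: "real^3" and K V :: real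
  assumes "compact S" and "convex S"
    and "V = measure lebesgue S" and "V > 0"
    and "\<forall>P\<in>S. 2 *\<^sub>R C - P \<in> S"
    and "\<forall>P\<in>S. P $ 3 \<ge> 0"
    and "\<exists>P\<in>S. P $ 3 = 0"
    and "C $ 3 > 0"
    and "K > 0"
  shows "V / (K * sqrt (C $ 3)) \<le> drainage_time K S
         \<and> drainage_time K S \<le> sqrt 2 * V / (K * sqrt (C $ 3))"
proof -
  have "V = measure lborel S"
    using assms(1,3) by (simp add: borel_compact)
  then have "V / sqrt (C $ 3) \<le> integral S (\<lambda>p. 1 / sqrt (p $ 3))"
    and "integral S (\<lambda>p. 1 / sqrt (p $ 3)) \<le> sqrt 2 * V / sqrt (C $ 3)"
    using assms nn_integral_inv_sqrt_third_coordinate_bounds[of S C]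
    by (auto intro!: integral_bounds_of_nn_integral_bounds borel_compact)
  with \<open>K > 0\<close> show ?thesis
    by (simp add: drainage_time_def divide_right_mono field_simps)
qed

end
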